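(* Let $K$ be a field of characteristic $0$, let $S=K[x_1,\ldots,x_n]$ be graded by $\deg x_i=a_i>0$, and let $I\subset S$ be a homogeneous unmixed ideal of height two. Suppose that the symbolic Rees algebra $\bigoplus_{k\ge0} I^{(k)}t^k\subseteq S[t]$ is generated in degrees $1$ and $2$, and that $(I^{(2)})^2\subseteq I^3$. Then $(I^{(k-1)})^2\subseteq I^k$ for all $k\ge2$.
   Context: The $m$-th symbolic power is $I^{(m)}=\bigcup_{t\ge1} I^m:L^t$, where $L$ is the intersection of all associated, non-minimal prime ideals of $I^m$; $I^{(0)}=S$. *)

theory Defs
  imports "HOL-Library.Poly_Mapping" "HOL-Library.Extended_Nat"
begin

definition is_ideal :: "'a::comm_ring_1 set \<Rightarrow> bool" where
  "is_ideal I \<longleftrightarrow> 0 \<in> I \<and> (\<forall>x\<in>I. \<forall>y\<in>I. x + y \<in> I) \<and> (\<forall>r. \<forall>x\<in>I. r * x \<in> I)"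

definition ideal_gen :: "'a::comm_ring_1 set \<Rightarrow> 'a set" where
  "ideal_gen X = \<Inter>{J. is_ideal J \<and> X \<subseteq> J}"

definition ideal_prod :: "'a::comm_ring_1 set \<Rightarrow> 'a set \<Rightarrow> 'a set" where
  "ideal_prod I J = ideal_gen {i * j | i j. i \<in> I \<and> j \<in> J}"

fun ideal_pow :: "'a::comm_ring_1 set \<Rightarrow> nat \<Rightarrow> 'a set" where
  "ideal_pow I 0 = UNIV"
| "ideal_pow I (Suc k) = ideal_prod I (ideal_pow I k)"

definition ideal_colon :: "'a::comm_ring_1 set \<Rightarrow> 'a set \<Rightarrow> 'a set" where
  "ideal_colon I J = {f. \<forall>g\<in>J. f * g \<in> I}"

definition prime_ideal :: "'a::comm_ring_1 set \<Rightarrow> bool" where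
  "prime_ideal P \<longleftrightarrow> is_ideal P \<and> P \<noteq> UNIV \<and> (\<forall>a b. a * b \<in> P \<longrightarrow> a \<in> P \<or> b \<in> P)"

definition ass_primes :: "'a::comm_ring_1 set \<Rightarrow> 'a set set" where
  "ass_primes I = {P. prime_ideal P \<and> (\<exists>f. P = ideal_colon I {f})}"

definition minimal_prime_over :: "'a::comm_ring_1 set \<Rightarrow> 'a set \<Rightarrow> bool" where
  "minimal_prime_over I P \<longleftrightarrow> prime_ideal P \<and> I \<subseteq> P \<and>
     (\<forall>Q. prime_ideal Q \<and> I \<subseteq> Q \<and> Q \<subseteq> P \<longrightarrow> Q = P)"

definition height_prime :: "'a::comm_ring_1 set \<Rightarrow> enat" where
  "height_prime P = Sup {enat n | n. \<exists>c :: nat \<Rightarrow> 'a set.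
      (\<forall>i\<le>n. prime_ideal (c i)) \<and> (\<forall>i<n. c i \<subset> c (Suc i)) \<and> c n = P}"

definition ideal_height :: "'a::comm_ring_1 set \<Rightarrow> enat" where
  "ideal_height I = Inf {height_prime P | P. prime_ideal P \<and> I \<subseteq> P}"

definition unmixed :: "'a::comm_ring_1 set \<Rightarrow> bool" where
  "unmixed I \<longleftrightarrow> (\<forall>P\<in>ass_primes I. height_prime P = ideal_height I)"

definition symb_L :: "'a::comm_ring_1 set \<Rightarrow> nat \<Rightarrow> 'a set" where
  "symb_L I m = \<Inter>{P \<in> ass_primes (ideal_pow I m). \<not> minimal_prime_over (ideal_pow I m) P}"

definition symb_pow :: "'a::comm_ring_1 set \<Rightarrow> nat \<Rightarrow> 'a set" where
  "symb_pow I m = (if m = 0 then UNIV else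
     (\<Union>t\<in>{1..}. ideal_colon (ideal_pow I m) (ideal_pow (symb_L I m) t)))"

text \<open>The symbolic Rees algebra is generated in degrees 1 and 2: each graded piece I^(k)
  equals the degree-k part of the S-subalgebra of S[t] generated by I^(1) t and I^(2) t^2,
  namely the sum over i + 2j = k of (I^(1))^i (I^(2))^j.\<close>
definition symb_rees_gen_deg_1_2 :: "'a::comm_ring_1 set \<Rightarrow> bool" where
  "symb_rees_gen_deg_1_2 I \<longleftrightarrow> (\<forall>k. symb_pow I k =
     ideal_gen (\<Union>{ideal_prod (ideal_pow (symb_pow I 1) i) (ideal_pow (symb_pow I 2) j)
                   | i j. i + 2 * j = k}))"

type_synonym ('v, 'k) mpoly = "('v \<Rightarrow>\<^sub>0 nat) \<Rightarrow>\<^sub>0 'k"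

definition wdeg :: "('v::finite \<Rightarrow> nat) \<Rightarrow> ('v \<Rightarrow>\<^sub>0 nat) \<Rightarrow> nat" where
  "wdeg a m = (\<Sum>v\<in>UNIV. Poly_Mapping.lookup m v * a v)"

definition homogeneous :: "('v::finite \<Rightarrow> nat) \<Rightarrow> ('v, 'k::comm_ring_1) mpoly \<Rightarrow> bool" where
  "homogeneous a f \<longleftrightarrow> (\<exists>d. \<forall>m\<in>Poly_Mapping.keys f. wdeg a m = d)"

definition homogeneous_ideal :: "('v::finite \<Rightarrow> nat) \<Rightarrow> ('v, 'k::comm_ring_1) mpoly set \<Rightarrow> bool" where
  "homogeneous_ideal a I \<longleftrightarrow> is_ideal I \<and> I = ideal_gen {f \<in> I. homogeneous a f}"

end

theory Submission
  imports Defs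
begin

text \<open>
  Unmixedness of finite height rules out embedded primes, so the first symbolic power
  I^(1) is I itself. Write J = I^(2). Generation of the symbolic Rees algebra in degrees 1
  and 2 gives I^2 \<subseteq> J and makes I^(n) the ideal generated by the products I^i J^j with
  i + 2j = n. The product of two such generators has the form I^(2s) J^j with s + j = n;
  using J^2 \<subseteq> I^3 on pairs of factors J, and absorbing a leftover single J together with
  a factor I^2, it lies in I^(n+1).
\<close>

lemma is_ideal_ideal_gen: "is_ideal (ideal_gen X)"
  unfolding ideal_gen_def is_ideal_def by auto

lemma ideal_gen_superset: "X \<subseteq> ideal_gen X"
  unfolding ideal_gen_def by auto

lemma ideal_gen_least: "is_ideal J \<Longrightarrow> X \<subseteq> J \<Longrightarrow> ideal_gen X \<subseteq> J"
  unfolding ideal_gen_def by auto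

lemma is_ideal_mult_right: "is_ideal J \<Longrightarrow> x \<in> J \<Longrightarrow> x * r \<in> J"
  unfolding is_ideal_def by (auto simp: mult.commute)

lemma is_ideal_UNIV: "is_ideal (UNIV :: 'a::comm_ring_1 set)"
  unfolding is_ideal_def by auto

lemma is_ideal_ideal_prod: "is_ideal (ideal_prod A B)"
  unfolding ideal_prod_def by (rule is_ideal_ideal_gen)

lemma ideal_prod_mem: "a \<in> A \<Longrightarrow> b \<in> B \<Longrightarrow> a * b \<in> ideal_prod A B"
  unfolding ideal_prod_def by (rule subsetD[OF ideal_gen_superset]) blast

lemma ideal_prod_least:
  "is_ideal T \<Longrightarrow> (\<And>a b. a \<in> A \<Longrightarrow> b \<in> B \<Longrightarrow> a * b \<in> T) \<Longrightarrow> ideal_prod A B \<subseteq> T"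
  unfolding ideal_prod_def by (rule ideal_gen_least) auto

lemma ideal_gen_mult_mem:
  assumes T: "is_ideal T" and gens: "\<And>a b. a \<in> X \<Longrightarrow> b \<in> Y \<Longrightarrow> a * b \<in> T"
    and x: "x \<in> ideal_gen X" and y: "y \<in> ideal_gen Y"
  shows "x * y \<in> T"
proof -
  have "a * y \<in> T" if a: "a \<in> X" for a
  proof -
    have "is_ideal {b. a * b \<in> T}" using T unfolding is_ideal_def
      by (auto simp: distrib_left) (metis mult.left_commute)
    moreover have "Y \<subseteq> {b. a * b \<in> T}" using gens a by auto
    ultimately show ?thesis using y ideal_gen_least by blast
  qed
  moreover have "is_ideal {a. a * y \<in> T}" using T unfolding is_ideal_def
    by (auto simp: distrib_right mult.assoc)
  ultimately show ?thesis using x ideal_gen_least[of "{a. a * y \<in> T}" X] by blast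
qed

lemma ideal_prod_ideal_gen_least:
  assumes "is_ideal T" and "\<And>a b. a \<in> X \<Longrightarrow> b \<in> Y \<Longrightarrow> a * b \<in> T"
  shows "ideal_prod (ideal_gen X) (ideal_gen Y) \<subseteq> T"
  using ideal_gen_mult_mem[OF assms] by (rule ideal_prod_least[OF assms(1)])

lemma ideal_prod_commute: "ideal_prod A B = ideal_prod B A"
proof -
  have "{i * j | i j. i \<in> A \<and> j \<in> B} = {i * j | i j. i \<in> B \<and> j \<in> A}"
    by (auto, (metis mult.commute)+)
  then show ?thesis unfolding ideal_prod_def by simp
qed

lemma ideal_prod_assoc_subset: "ideal_prod (ideal_prod A B) C \<subseteq> ideal_prod A (ideal_prod B C)"
proof (rule ideal_prod_least[OF is_ideal_ideal_prod])
  fix x c assume "x \<in> ideal_prod A B" and c: "c \<in> C"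
  then have x: "x \<in> ideal_gen {i * j | i j. i \<in> A \<and> j \<in> B}" by (simp add: ideal_prod_def)
  show "x * c \<in> ideal_prod A (ideal_prod B C)"
  proof (rule ideal_gen_mult_mem[OF is_ideal_ideal_prod _ x])
    show "c \<in> ideal_gen C" using c ideal_gen_superset by blast
    fix u v assume "u \<in> {i * j | i j. i \<in> A \<and> j \<in> B}" "v \<in> C"
    then show "u * v \<in> ideal_prod A (ideal_prod B C)"
      by (auto simp: mult.assoc ideal_prod_mem)
  qed
qed

lemma ideal_prod_assoc: "ideal_prod (ideal_prod A B) C = ideal_prod A (ideal_prod B C)"
proof
  show "ideal_prod A (ideal_prod B C) \<subseteq> ideal_prod (ideal_prod A B) C"
    using ideal_prod_assoc_subset[of C B A] by (simp add: ideal_prod_commute)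
qed (rule ideal_prod_assoc_subset)

lemma ideal_prod_left_commute: "ideal_prod A (ideal_prod B C) = ideal_prod B (ideal_prod A C)"
  by (metis ideal_prod_assoc ideal_prod_commute)

lemma ideal_prod_mono: "A \<subseteq> A' \<Longrightarrow> B \<subseteq> B' \<Longrightarrow> ideal_prod A B \<subseteq> ideal_prod A' B'"
  by (rule ideal_prod_least[OF is_ideal_ideal_prod]) (auto intro: ideal_prod_mem)

lemma ideal_prod_subset_left: "is_ideal A \<Longrightarrow> ideal_prod A B \<subseteq> A"
  by (rule ideal_prod_least) (auto intro: is_ideal_mult_right)

lemma ideal_prod_UNIV_right: "is_ideal A \<Longrightarrow> ideal_prod A UNIV = A"
  using ideal_prod_subset_left[of A UNIV] ideal_prod_mem[of _ A 1 UNIV] by auto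

lemma is_ideal_ideal_pow: "is_ideal (ideal_pow A n)"
  by (cases n) (auto simp: is_ideal_UNIV is_ideal_ideal_prod)

lemma ideal_pow_UNIV: "ideal_pow UNIV n = UNIV"
  by (induction n) (simp_all add: ideal_prod_UNIV_right is_ideal_UNIV)

lemma ideal_pow_2: "is_ideal J \<Longrightarrow> ideal_pow J 2 = ideal_prod J J"
  by (simp add: numeral_2_eq_2 ideal_prod_UNIV_right)

lemma ideal_pow_add: "ideal_pow A (m + n) = ideal_prod (ideal_pow A m) (ideal_pow A n)"
proof (induction m)
  case 0
  then show ?case
    using ideal_prod_UNIV_right[OF is_ideal_ideal_pow, of A n] by (simp add: ideal_prod_commute)
next
  case (Suc m)
  then show ?case by (simp add: ideal_prod_assoc)
qed

lemma ideal_pow_mono: "A \<subseteq> B \<Longrightarrow> ideal_pow A n \<subseteq> ideal_pow B n"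
  by (induction n) (simp_all add: ideal_prod_mono)

lemma ideal_pow_antimono: "m \<le> n \<Longrightarrow> ideal_pow A n \<subseteq> ideal_pow A m"
  using ideal_prod_subset_left[OF is_ideal_ideal_pow]
  by (metis ideal_pow_add le_Suc_ex)

lemma ideal_prod_pow_pow:
  "ideal_prod (ideal_prod (ideal_pow A a) (ideal_pow B b)) (ideal_prod (ideal_pow A c) (ideal_pow B d))
   = ideal_prod (ideal_pow A (a + c)) (ideal_pow B (b + d))"
  by (simp only: ideal_pow_add ideal_prod_assoc ideal_prod_left_commute[of "ideal_pow B b"])

lemma ideal_pow_even_subset:
  assumes J: "is_ideal J" and J2: "ideal_prod J J \<subseteq> ideal_pow I 3"
  shows "ideal_pow J (2 * q) \<subseteq> ideal_pow I (3 * q)"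
proof (induction q)
  case (Suc q)
  have "ideal_pow J (2 * Suc q) = ideal_prod (ideal_pow J 2) (ideal_pow J (2 * q))"
    using ideal_pow_add[of J 2 "2 * q"] by simp
  also have "\<dots> \<subseteq> ideal_prod (ideal_pow I 3) (ideal_pow I (3 * q))"
    using Suc J2 by (intro ideal_prod_mono) (auto simp: ideal_pow_2[OF J])
  also have "\<dots> = ideal_pow I (3 * Suc q)"
    using ideal_pow_add[of I 3 "3 * q"] by simp
  finally show ?case .
qed simp

lemma eSuc_height_prime_le:
  assumes P: "prime_ideal P" and Q: "prime_ideal Q" and QP: "Q \<subset> P"
  shows "eSuc (height_prime Q) \<le> height_prime P"
proof -
  define chains where "chains R = {enat n | n. \<exists>c :: nat \<Rightarrow> 'a set.
      (\<forall>i\<le>n. prime_ideal (c i)) \<and> (\<forall>i<n. c i \<subset> c (Suc i)) \<and> c n = R}" for R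
  have "enat 0 \<in> chains Q"
    unfolding chains_def using Q by (auto intro!: exI[of _ "\<lambda>_. Q"])
  have "eSuc ` chains Q \<subseteq> chains P"
  proof
    fix x assume "x \<in> eSuc ` chains Q"
    then obtain n c where x: "x = enat (Suc n)" and c: "\<forall>i\<le>n. prime_ideal (c i)"
      "\<forall>i<n. c i \<subset> c (Suc i)" "c n = Q"
      unfolding chains_def by (auto simp: eSuc_enat)
    have "(\<forall>i\<le>Suc n. prime_ideal ((c(Suc n := P)) i))
        \<and> (\<forall>i<Suc n. (c(Suc n := P)) i \<subset> (c(Suc n := P)) (Suc i))"
      using c P QP by (auto simp: le_Suc_eq less_Suc_eq)
    then show "x \<in> chains P"
      unfolding chains_def x by (intro CollectI exI[of _ "Suc n"] conjI exI[of _ "c(Suc n := P)"]) auto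
  qed
  then have "Sup (eSuc ` chains Q) \<le> Sup (chains P)"
    by (rule Sup_subset_mono)
  moreover have "eSuc (Sup (chains Q)) = Sup (eSuc ` chains Q)"
    using \<open>enat 0 \<in> chains Q\<close> by (intro eSuc_Sup) blast
  ultimately show ?thesis unfolding height_prime_def chains_def by argo
qed

lemma ass_primes_minimal_if_unmixed:
  assumes I: "is_ideal I" and "unmixed I" and fin: "ideal_height I \<noteq> \<infinity>"
    and P: "P \<in> ass_primes I"
  shows "minimal_prime_over I P"
proof (rule ccontr)
  assume nonmin: "\<not> minimal_prime_over I P"
  obtain f where Pp: "prime_ideal P" and "P = ideal_colon I {f}"
    using P unfolding ass_primes_def by auto
  then have "I \<subseteq> P" using I by (auto simp: ideal_colon_def intro: is_ideal_mult_right)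
  then obtain Q where Q: "prime_ideal Q" "I \<subseteq> Q" "Q \<subset> P"
    using nonmin Pp unfolding minimal_prime_over_def by auto
  have "ideal_height I \<le> height_prime Q"
    unfolding ideal_height_def using Q by (auto intro: Inf_lower)
  then have "eSuc (ideal_height I) \<le> height_prime P"
    using eSuc_height_prime_le[OF Pp Q(1,3)] by (metis eSuc_ile_mono order_trans)
  moreover have "height_prime P = ideal_height I"
    using \<open>unmixed I\<close> P unfolding unmixed_def by auto
  ultimately show False using fin by (cases "ideal_height I") (auto simp: eSuc_enat)
qed

lemma symb_pow_1_unmixed:
  assumes I: "is_ideal I" and "unmixed I" and "ideal_height I \<noteq> \<infinity>"
  shows "symb_pow I 1 = I"
proof -
  have I1: "ideal_pow I 1 = I" using I by (simp add: ideal_prod_UNIV_right)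
  have "symb_L I 1 = UNIV"
    using ass_primes_minimal_if_unmixed[OF assms] unfolding symb_L_def I1 by auto
  moreover have "ideal_colon I UNIV = I"
    using I by (auto simp: ideal_colon_def intro: is_ideal_mult_right dest: spec[of _ 1])
  ultimately show ?thesis
    unfolding symb_pow_def I1 by (auto simp: ideal_pow_UNIV)
qed

lemma ideal_prod_even_pow_subset:
  assumes AI: "A \<subseteq> I" and J: "is_ideal J" and A2: "ideal_pow A 2 \<subseteq> J"
    and J2: "ideal_prod J J \<subseteq> ideal_pow I 3"
    and pos: "s + j \<ge> 1" and odd: "odd j \<longrightarrow> s \<ge> 1"
  shows "ideal_prod (ideal_pow A (2 * s)) (ideal_pow J j) \<subseteq> ideal_pow I (s + j + 1)"
proof (cases "even j")
  case True
  then obtain q where q: "j = 2 * q" by blast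
  have "ideal_prod (ideal_pow A (2 * s)) (ideal_pow J j)
      \<subseteq> ideal_prod (ideal_pow I (2 * s)) (ideal_pow I (3 * q))"
    using q ideal_pow_even_subset[OF J J2] ideal_pow_mono[OF AI]
    by (intro ideal_prod_mono) auto
  also have "\<dots> \<subseteq> ideal_pow I (s + j + 1)"
    unfolding ideal_pow_add[symmetric] using q pos by (intro ideal_pow_antimono) auto
  finally show ?thesis .
next
  case False
  then obtain q t where q: "j = Suc (2 * q)" and t: "s = Suc t"
    using odd by (metis oddE Suc_eq_plus1 not0_implies_Suc not_one_le_zero)
  have "ideal_prod (ideal_pow A (2 * s)) (ideal_pow J j)
     = ideal_prod (ideal_pow A (2 * t)) (ideal_prod (ideal_prod (ideal_pow A 2) J) (ideal_pow J (2 * q)))"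
    using ideal_pow_add[of A "2 * t" 2] by (simp add: q t ideal_prod_assoc)
  also have "\<dots> \<subseteq> ideal_prod (ideal_pow I (2 * t)) (ideal_prod (ideal_pow I 3) (ideal_pow I (3 * q)))"
  proof (intro ideal_prod_mono)
    show "ideal_prod (ideal_pow A 2) J \<subseteq> ideal_pow I 3"
      using ideal_prod_mono[OF A2 order_refl] J2 by (rule order_trans)
  qed (simp_all add: ideal_pow_mono[OF AI] ideal_pow_even_subset[OF J J2])
  also have "\<dots> \<subseteq> ideal_pow I (s + j + 1)"
    unfolding ideal_pow_add[symmetric] using q t by (intro ideal_pow_antimono) auto
  finally show ?thesis .
qed

lemma symb_pow_square_subset:
  fixes I :: "'a::comm_ring_1 set"
  assumes rees: "symb_rees_gen_deg_1_2 I" and I1: "symb_pow I 1 \<subseteq> I"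
    and J2: "ideal_prod (symb_pow I 2) (symb_pow I 2) \<subseteq> ideal_pow I 3" and "n \<ge> 1"
  shows "ideal_prod (symb_pow I n) (symb_pow I n) \<subseteq> ideal_pow I (Suc n)"
proof -
  define A where "A = symb_pow I 1"
  define J where "J = symb_pow I 2"
  define gens where "gens m = \<Union>{ideal_prod (ideal_pow A i) (ideal_pow J j) | i j. i + 2 * j = m}" for m
  have symb: "symb_pow I m = ideal_gen (gens m)" for m
    using rees unfolding symb_rees_gen_deg_1_2_def gens_def A_def J_def by blast
  have J: "is_ideal J" unfolding J_def symb by (rule is_ideal_ideal_gen)
  have "ideal_prod (ideal_pow A 2) (ideal_pow J 0) \<subseteq> gens 2"
    unfolding gens_def by (intro Union_upper CollectI exI[of _ 2] exI[of _ 0]) simp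
  then have A2: "ideal_pow A 2 \<subseteq> J"
    using ideal_gen_superset[of "gens 2"]
    by (simp add: ideal_prod_UNIV_right is_ideal_ideal_pow J_def symb)
  show ?thesis
    unfolding symb[of n]
  proof (rule ideal_prod_ideal_gen_least[OF is_ideal_ideal_pow])
    fix x y assume "x \<in> gens n" "y \<in> gens n"
    then obtain i1 j1 i2 j2 where x: "x \<in> ideal_prod (ideal_pow A i1) (ideal_pow J j1)"
      and y: "y \<in> ideal_prod (ideal_pow A i2) (ideal_pow J j2)"
      and deg: "i1 + 2 * j1 = n" "i2 + 2 * j2 = n"
      unfolding gens_def by blast
    define s where "s = n - (j1 + j2)"
    have i: "i1 + i2 = 2 * s" and k: "s + (j1 + j2) + 1 = Suc n"
      using deg unfolding s_def by arith+
    have "x * y \<in> ideal_prod (ideal_pow A (2 * s)) (ideal_pow J (j1 + j2))"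
      using ideal_prod_mem[OF x y] unfolding ideal_prod_pow_pow i .
    also have "\<dots> \<subseteq> ideal_pow I (s + (j1 + j2) + 1)"
    proof (rule ideal_prod_even_pow_subset[OF I1[folded A_def] J A2 J2[folded J_def]])
      show "s + (j1 + j2) \<ge> 1" using k \<open>n \<ge> 1\<close> by linarith
      show "odd (j1 + j2) \<longrightarrow> s \<ge> 1" using i deg by (cases s) auto
    qed
    finally show "x * y \<in> ideal_pow I (Suc n)" unfolding k .
  qed
qed

theorem proposition2p9:
  fixes a :: "'v::finite \<Rightarrow> nat"
    and I :: "('v, 'k::field_char_0) mpoly set"
  assumes "\<forall>v. a v > 0"
    and "homogeneous_ideal a I"
    and "unmixed I"
    and "ideal_height I = 2"
    and "symb_rees_gen_deg_1_2 I"
    and "ideal_prod (symb_pow I 2) (symb_pow I 2) \<subseteq> ideal_pow I 3"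
  shows "\<forall>k\<ge>2. ideal_prod (symb_pow I (k - 1)) (symb_pow I (k - 1)) \<subseteq> ideal_pow I k"
proof (intro allI impI)
  fix k :: nat assume "k \<ge> 2"
  have "is_ideal I" using assms(2) unfolding homogeneous_ideal_def by simp
  then have "symb_pow I 1 = I"
    using assms(3,4) by (intro symb_pow_1_unmixed) (simp_all add: numeral_eq_enat)
  then have "ideal_prod (symb_pow I (k - 1)) (symb_pow I (k - 1)) \<subseteq> ideal_pow I (Suc (k - 1))"
    using \<open>k \<ge> 2\<close> by (intro symb_pow_square_subset[OF assms(5) _ assms(6)]) auto
  then show "ideal_prod (symb_pow I (k - 1)) (symb_pow I (k - 1)) \<subseteq> ideal_pow I k"
    using \<open>k \<ge> 2\<close> by (simp add: Suc_diff_1)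
qed

end
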